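(* Suppose $(\Omega,\mathcal{A},\mathbf{P})$ is complete. Let $X$ be a random measurable set of $\mathbb{R}$ that has a.s. locally finite perimeter. Then there exists a random closed set $Z\subset\mathbb{R}$ such that for $\mathbf{P}$-almost all $\omega$ and all $a<b\in\mathbb{R}$, $\mathcal{L}^1(X(\omega)\Delta Z(\omega))=0$ and ${\operatorname{Per}}(X(\omega);(a,b))=\mathcal{H}^0(\partial Z(\omega)\cap(a,b))$.
   Context: A random measurable set is a measurable map from $\Omega$ into the space of Lebesgue classes of measurable subsets of $\mathbb{R}$ with the Borel $\sigma$-algebra of local convergence in measure. For open $U\subset\mathbb{R}$, ${\operatorname{Per}}(A;U)=\sup\{\int_U\mathbb{1}_A\varphi'\,dx:\varphi\in C^1_c(U),|\varphi|\le1\}$; $X$ has a.s. locally finite perimeter if a.s. ${\operatorname{Per}}(X;V)<\infty$ for all bounded open $V$. A random closed set is a map $Z$ into closed subsets of $\mathbb{R}$ with $\{Z\cap K\ne\emptyset\}\in\mathcal{A}$ for all compact $K$. $\mathcal{H}^0$ is counting measure; $\partial Z$ is the topological boundary. *)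

theory Defs
  imports "HOL-Analysis.Analysis" "HOL-Probability.Probability"
begin

text \<open>Topology of local convergence in measure on Lebesgue measurable subsets of the reals
  (identified with their indicators): a family U of Lebesgue measurable sets is open iff for
  every A in U there are n and e > 0 such that every Lebesgue measurable B with
  Leb((A sym-diff B) inter [-n,n]) < e lies in U.  Borel sets of this (pseudo-metrisable)
  topology are saturated under a.e. equality, so this is the Borel sigma-algebra on
  Lebesgue classes pulled back to representatives.\<close>

definition loc_meas_open :: "real set set \<Rightarrow> bool" where
  "loc_meas_open U \<longleftrightarrow> U \<subseteq> sets lebesgue \<and>
     (\<forall>A\<in>U. \<exists>n::nat. \<exists>e>0. \<forall>B\<in>sets lebesgue.
        emeasure lebesgue (((A - B) \<union> (B - A)) \<inter> {- real n .. real n}) < ennreal e \<longrightarrow> B \<in> U)"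

definition loc_meas_space :: "real set measure" where
  "loc_meas_space = sigma (sets lebesgue) {U. loc_meas_open U}"

definition random_measurable_set :: "'a measure \<Rightarrow> ('a \<Rightarrow> real set) \<Rightarrow> bool" where
  "random_measurable_set M X \<longleftrightarrow> X \<in> M \<rightarrow>\<^sub>M loc_meas_space"

definition C1c_unit :: "real set \<Rightarrow> (real \<Rightarrow> real) set" where
  "C1c_unit U = {\<phi>. \<phi> C1_differentiable_on UNIV \<and>
      compact (closure {x. \<phi> x \<noteq> 0}) \<and> closure {x. \<phi> x \<noteq> 0} \<subseteq> U \<and>
      (\<forall>x. \<bar>\<phi> x\<bar> \<le> 1)}"

definition Per :: "real set \<Rightarrow> real set \<Rightarrow> ereal" where
  "Per A U = (SUP \<phi>\<in>C1c_unit U.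
      ereal (LINT x|lebesgue. indicator (A \<inter> U) x * deriv \<phi> x))"

definition random_closed_set :: "'a measure \<Rightarrow> ('a \<Rightarrow> real set) \<Rightarrow> bool" where
  "random_closed_set M Z \<longleftrightarrow> (\<forall>\<omega>\<in>space M. closed (Z \<omega>)) \<and>
     (\<forall>K. compact K \<longrightarrow> {\<omega>\<in>space M. Z \<omega> \<inter> K \<noteq> {}} \<in> sets M)"

end

theory Submission
  imports Defs
begin

text \<open>
  The closed representative of a realisation A is its essential support Z, the set of points
  all of whose neighbourhoods meet A in positive measure.  Close to a boundary point of Z
  there are density points both of A and of its complement; the difference of two smoothed
  steps placed at them is a test function whose integral against the indicator of A is almost 1.
  Hence every neighbourhood of a boundary point carries perimeter at least 1, and superadditivity
  of the perimeter over disjoint intervals bounds the number of boundary points in (a, b) by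
  Per(A; (a, b)).  So the boundary of Z is locally finite, and the same argument inside Z shows
  that Z - A is null, whence A = Z almost everywhere.  Conversely Z is locally a finite union of
  intervals, and integrating a test function \<open>\<phi>'\<close> over them leaves a boundary term of
  size at most 1 per boundary point.  Finally Z meets a compact set K iff A has positive measure
  in every neighbourhood of K, which is an open condition for local convergence in measure; this
  makes Z a random closed set.
\<close>

section \<open>Smooth ramps and their integrals\<close>

definition smooth_step :: "real \<Rightarrow> real" where
  "smooth_step t = (if t \<le> 0 then 0 else if 1 \<le> t then 1 else 3*t^2 - 2*t^3)"

definition smooth_step_deriv :: "real \<Rightarrow> real" where
  "smooth_step_deriv t = (if t \<le> 0 then 0 else if 1 \<le> t then 0 else 6*t - 6*t^2)"

lemma has_real_derivative_split:
  assumes "(f has_real_derivative D) (at (a::real) within {..a})"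
      and "(f has_real_derivative D) (at a within {a..})"
  shows "(f has_real_derivative D) (at a)"
proof -
  have "(f has_real_derivative D) (at a within ({..a} \<union> {a..}))"
    using assms unfolding has_field_derivative_iff by (rule Lim_Un)
  moreover have "{..a} \<union> {a..} = (UNIV::real set)" by auto
  ultimately show ?thesis by simp
qed

lemma has_real_derivative_smooth_step:
  "(smooth_step has_real_derivative smooth_step_deriv t) (at t)"
proof -
  have cubic: "((\<lambda>t::real. 3*t^2 - 2*t^3) has_real_derivative (6*t - 6*t^2)) (at t within S)"
    for t S by (auto intro!: derivative_eq_intros simp: power2_eq_square)
  consider "t < 0" | "t = 0" | "0 < t \<and> t < 1" | "t = 1" | "1 < t" by linarith
  then show ?thesis
  proof cases
    case 1
    show ?thesis
      by (rule has_field_derivative_transform_within_open[of "\<lambda>_. 0" _ _ "{..<0}"])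
         (use 1 in \<open>auto simp: smooth_step_def smooth_step_deriv_def\<close>)
  next
    case 2
    show ?thesis
    proof (rule has_real_derivative_split)
      show "(smooth_step has_real_derivative smooth_step_deriv t) (at t within {..t})"
        by (rule has_field_derivative_transform_within[of "\<lambda>_. 0" _ _ _ 1])
           (use 2 in \<open>auto simp: smooth_step_def smooth_step_deriv_def\<close>)
      show "(smooth_step has_real_derivative smooth_step_deriv t) (at t within {t..})"
        using has_field_derivative_transform_within[OF cubic[of 0 "{0..}"], of 1 smooth_step] 2
        by (auto simp: smooth_step_def smooth_step_deriv_def dist_real_def)
    qed
  next
    case 3
    show ?thesis
      using has_field_derivative_transform_within_open[OF cubic[of t UNIV], of "{0<..<1}" smooth_step] 3
      by (auto simp: smooth_step_def smooth_step_deriv_def)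
  next
    case 4
    show ?thesis
    proof (rule has_real_derivative_split)
      show "(smooth_step has_real_derivative smooth_step_deriv t) (at t within {t..})"
        by (rule has_field_derivative_transform_within[of "\<lambda>_. 1" _ _ _ 1])
           (use 4 in \<open>auto simp: smooth_step_def smooth_step_deriv_def\<close>)
      show "(smooth_step has_real_derivative smooth_step_deriv t) (at t within {..t})"
        using has_field_derivative_transform_within[OF cubic[of 1 "{..1}"], of 1 smooth_step] 4
        by (auto simp: smooth_step_def smooth_step_deriv_def dist_real_def)
    qed
  next
    case 5
    show ?thesis
      by (rule has_field_derivative_transform_within_open[of "\<lambda>_. 1" _ _ "{1<..}"])
         (use 5 in \<open>auto simp: smooth_step_def smooth_step_deriv_def\<close>)
  qed
qed

lemma continuous_on_smooth_step_deriv: "continuous_on UNIV smooth_step_deriv"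
proof -
  have "smooth_step_deriv t = max 0 (6 * max 0 (min 1 t) - 6 * (max 0 (min 1 t))^2)" for t
  proof (cases "t \<le> 0 \<or> 1 \<le> t")
    case False
    then have "0 \<le> 6*t - 6*t^2" by (simp add: power2_eq_square)
    then show ?thesis using False by (auto simp: smooth_step_deriv_def)
  qed (auto simp: smooth_step_deriv_def)
  then have eq: "smooth_step_deriv = (\<lambda>t. max 0 (6 * max 0 (min 1 t) - 6 * (max 0 (min 1 t))^2))"
    by blast
  show ?thesis by (subst eq) (intro continuous_intros)
qed

lemma smooth_step_bounds: "0 \<le> smooth_step t" "smooth_step t \<le> 1"
proof -
  have "0 \<le> 3*t^2 - 2*t^3 \<and> 3*t^2 - 2*t^3 \<le> 1" if "0 < t" "t < 1"
  proof -
    have "3*t^2 - 2*t^3 = t^2 * (3 - 2*t)" "1 - (3*t^2 - 2*t^3) = (1 - t)^2 * (1 + 2*t)"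
      by (simp_all add: algebra_simps power2_eq_square power3_eq_cube)
    then show ?thesis using that by (smt (verit) mult_nonneg_nonneg zero_le_power2)
  qed
  then show "0 \<le> smooth_step t" "smooth_step t \<le> 1" by (auto simp: smooth_step_def)
qed

lemma smooth_step_deriv_bounds: "0 \<le> smooth_step_deriv t" "smooth_step_deriv t \<le> 3/2"
proof -
  have "0 \<le> 6*t - 6*t^2 \<and> 6*t - 6*t^2 \<le> 3/2" if "0 < t" "t < 1"
  proof -
    have "3/2 - (6*t - 6*t^2) = 6*(t - 1/2)^2" "6*t - 6*t^2 = 6*t*(1-t)"
      by (simp_all add: algebra_simps power2_eq_square)
    then show ?thesis using that by (smt (verit) mult_nonneg_nonneg zero_le_power2)
  qed
  then show "0 \<le> smooth_step_deriv t" "smooth_step_deriv t \<le> 3/2"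
    by (auto simp: smooth_step_deriv_def)
qed

definition ramp :: "real \<Rightarrow> real \<Rightarrow> real \<Rightarrow> real" where
  "ramp x0 d x = smooth_step ((x - x0 + d) / (2*d))"

definition ramp_deriv :: "real \<Rightarrow> real \<Rightarrow> real \<Rightarrow> real" where
  "ramp_deriv x0 d x = smooth_step_deriv ((x - x0 + d) / (2*d)) / (2*d)"

lemma has_real_derivative_ramp:
  assumes "d > 0"
  shows "(ramp x0 d has_real_derivative ramp_deriv x0 d x) (at x)"
proof -
  have "((\<lambda>x. (x - x0 + d) / (2*d)) has_real_derivative 1 / (2*d)) (at x)"
    using assms by (auto intro!: derivative_eq_intros)
  from DERIV_chain[OF has_real_derivative_smooth_step this] show ?thesis
    by (simp add: ramp_def[abs_def] ramp_deriv_def o_def)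
qed

lemma continuous_on_ramp_deriv: "d > 0 \<Longrightarrow> continuous_on UNIV (ramp_deriv x0 d)"
  unfolding ramp_deriv_def
  by (intro continuous_intros continuous_on_compose2[OF continuous_on_smooth_step_deriv]) auto

lemma ramp_deriv_eq_0:
  assumes "d > 0" "x \<notin> ball x0 d"
  shows "ramp_deriv x0 d x = 0"
proof -
  have "(x - x0 + d) / (2*d) \<le> 0 \<or> 1 \<le> (x - x0 + d) / (2*d)"
    using assms by (auto simp: field_simps dist_real_def)
  then show ?thesis by (auto simp: ramp_deriv_def smooth_step_deriv_def)
qed

lemma ramp_eq_0: "d > 0 \<Longrightarrow> x \<le> x0 - d \<Longrightarrow> ramp x0 d x = 0"
  by (simp add: ramp_def smooth_step_def divide_le_0_iff)

lemma ramp_eq_1: "d > 0 \<Longrightarrow> x0 + d \<le> x \<Longrightarrow> ramp x0 d x = 1"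
  by (simp add: ramp_def smooth_step_def field_simps)

lemma ramp_bounds: "0 \<le> ramp x0 d x" "ramp x0 d x \<le> 1"
  by (auto simp: ramp_def smooth_step_bounds)

lemma ramp_deriv_bounds:
  assumes "d > 0"
  shows "0 \<le> ramp_deriv x0 d x" "ramp_deriv x0 d x \<le> 3 / (4*d)"
proof -
  have "smooth_step_deriv ((x - x0 + d) / (2*d)) / (2*d) \<le> 3/2 / (2*d)"
    using assms smooth_step_deriv_bounds by (intro divide_right_mono) auto
  then show "ramp_deriv x0 d x \<le> 3 / (4*d)" by (simp add: ramp_deriv_def)
  show "0 \<le> ramp_deriv x0 d x" using assms smooth_step_deriv_bounds by (simp add: ramp_deriv_def)
qed

lemma integrable_indicator_mult_continuous:
  fixes g :: "real \<Rightarrow> real"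
  assumes E: "E \<in> sets lebesgue" and g: "continuous_on UNIV g"
    and bdd: "bounded {x\<in>E. g x \<noteq> 0}"
  shows "integrable lebesgue (\<lambda>x. indicator E x * g x)"
proof -
  obtain u where "\<And>x. x \<in> {x\<in>E. g x \<noteq> 0} \<Longrightarrow> \<bar>x\<bar> \<le> u"
    using bdd unfolding bounded_real by blast
  then have lu: "{x\<in>E. g x \<noteq> 0} \<subseteq> {-u..u}" by fastforce
  show ?thesis
  proof (rule Bochner_Integration.integrable_bound)
    have "integrable lborel (\<lambda>x. indicator {-u..u} x *\<^sub>R \<bar>g x\<bar>)"
      by (rule borel_integrable_compact) (auto intro!: continuous_intros continuous_on_subset[OF g])
    moreover have "(\<lambda>x. indicator {-u..u} x *\<^sub>R \<bar>g x\<bar>) \<in> borel_measurable borel"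
      using borel_measurable_continuous_onI[OF g] by measurable
    ultimately show "integrable lebesgue (\<lambda>x. indicator {-u..u} x *\<^sub>R \<bar>g x\<bar>)"
      by (simp add: integrable_completion)
    have "g \<in> borel_measurable lebesgue"
      using borel_measurable_continuous_onI[OF g] by (simp add: measurable_completion)
    then show "(\<lambda>x. indicator E x * g x) \<in> borel_measurable lebesgue"
      using E by (intro borel_measurable_times borel_measurable_indicator) auto
    show "AE x in lebesgue. norm (indicator E x * g x) \<le> norm (indicator {-u..u} x *\<^sub>R \<bar>g x\<bar>)"
      using lu by (intro AE_I2) (auto simp: indicator_def)
  qed
qed

lemma integral_indicator_Ioo_deriv:
  fixes f :: "real \<Rightarrow> real"
  assumes f': "\<And>x. (f has_real_derivative f' x) (at x)" and c: "continuous_on UNIV f'"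
    and "u \<le> v"
  shows "(LINT x|lebesgue. indicator {u<..<v} x * f' x) = f v - f u"
proof -
  have m: "f' \<in> borel_measurable borel" using borel_measurable_continuous_onI[OF c] .
  have "(LINT x|lebesgue. indicator {u<..<v} x * f' x) = (LINT x|lborel. indicator {u<..<v} x * f' x)"
    using m by (simp add: integral_completion)
  also have "\<dots> = (LINT x|lborel. indicator {u..v} x *\<^sub>R f' x)"
  proof (rule integral_cong_AE)
    show "AE x in lborel. indicator {u<..<v} x * f' x = indicator {u..v} x *\<^sub>R f' x"
      using AE_lborel_singleton[of u] AE_lborel_singleton[of v]
      by eventually_elim (auto simp: indicator_def)
  qed (use m in measurable)
  also have "\<dots> = f v - f u"
    using assms continuous_on_subset[OF c, of "{u..v}"]
    by (intro integral_FTC_atLeastAtMost)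
       (auto intro: has_field_derivative_at_within
             simp: has_real_derivative_iff_has_vector_derivative[symmetric])
  finally show ?thesis .
qed

lemma integrable_ramp_deriv:
  "d > 0 \<Longrightarrow> S \<in> sets lebesgue \<Longrightarrow> integrable lebesgue (\<lambda>x. indicator S x * ramp_deriv x0 d x)"
  by (rule integrable_indicator_mult_continuous[OF _ continuous_on_ramp_deriv])
     (auto intro: bounded_subset[of "ball x0 d"] dest: ramp_deriv_eq_0)

lemma integral_ramp_deriv_le:
  assumes d: "d > 0" and S: "S \<in> sets lebesgue"
  shows "(LINT x|lebesgue. indicator S x * ramp_deriv x0 d x)
           \<le> 3 / (4*d) * measure lebesgue (S \<inter> ball x0 d)"
proof -
  have SB: "S \<inter> ball x0 d \<in> lmeasurable"
    by (metis S fmeasurable_Int_fmeasurable inf_commute lmeasurable_ball)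
  have "(LINT x|lebesgue. indicator S x * ramp_deriv x0 d x)
        = (LINT x|lebesgue. indicator (S \<inter> ball x0 d) x * ramp_deriv x0 d x)"
    using ramp_deriv_eq_0[OF d] by (intro Bochner_Integration.integral_cong) (auto simp: indicator_def)
  also have "\<dots> \<le> (LINT x|lebesgue. indicator (S \<inter> ball x0 d) x *\<^sub>R (3 / (4*d)))"
    using SB ramp_deriv_bounds[OF d, of x0]
    by (intro integral_mono integrable_ramp_deriv[OF d] integrable_indicator)
       (auto simp: indicator_def fmeasurable_def)
  also have "\<dots> = 3 / (4*d) * measure lebesgue (S \<inter> ball x0 d)"
    by simp
  finally show ?thesis .
qed

lemma integral_ramp_deriv_ge:
  assumes d: "d > 0" and S: "S \<in> sets lebesgue"
  shows "1 - 3 / (4*d) * measure lebesgue (ball x0 d - S)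
           \<le> (LINT x|lebesgue. indicator S x * ramp_deriv x0 d x)"
proof -
  have B: "ball x0 d = {x0-d<..<x0+d}" by (simp add: ball_eq_greaterThanLessThan)
  have "indicator S x * ramp_deriv x0 d x = indicator {x0-d<..<x0+d} x * ramp_deriv x0 d x
          - indicator (ball x0 d - S) x * ramp_deriv x0 d x" for x
    using ramp_deriv_eq_0[OF d, of x x0] by (auto simp: indicator_def B)
  then have "(LINT x|lebesgue. indicator S x * ramp_deriv x0 d x) =
        (LINT x|lebesgue. indicator {x0-d<..<x0+d} x * ramp_deriv x0 d x) -
        (LINT x|lebesgue. indicator (ball x0 d - S) x * ramp_deriv x0 d x)"
    using d S by (simp only:) (intro Bochner_Integration.integral_diff integrable_ramp_deriv; auto)
  also have "(LINT x|lebesgue. indicator {x0-d<..<x0+d} x * ramp_deriv x0 d x)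
      = ramp x0 d (x0+d) - ramp x0 d (x0-d)"
    using d by (intro integral_indicator_Ioo_deriv has_real_derivative_ramp continuous_on_ramp_deriv)
       auto
  also have "\<dots> = 1" using ramp_eq_0[OF d] ramp_eq_1[OF d] by simp
  finally have "(LINT x|lebesgue. indicator S x * ramp_deriv x0 d x) =
      1 - (LINT x|lebesgue. indicator (ball x0 d - S) x * ramp_deriv x0 d x)" .
  moreover have "ball x0 d - S \<in> sets lebesgue" using S by auto
  ultimately show ?thesis
    using integral_ramp_deriv_le[OF d, of "ball x0 d - S" x0] by (simp add: Int_absorb2)
qed

section \<open>Test functions and the variational perimeter\<close>

lemma C1c_unitD:
  assumes "\<phi> \<in> C1c_unit U"
  shows "compact (closure {x. \<phi> x \<noteq> 0})" "closure {x. \<phi> x \<noteq> 0} \<subseteq> U" "\<bar>\<phi> x\<bar> \<le> 1"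
  using assms unfolding C1c_unit_def by auto

lemma C1c_unit_mono: "U \<subseteq> V \<Longrightarrow> C1c_unit U \<subseteq> C1c_unit V"
  unfolding C1c_unit_def by blast

lemma C1c_unit_derivative:
  assumes "\<phi> \<in> C1c_unit U"
  obtains D where "\<And>x. (\<phi> has_real_derivative D x) (at x)" "continuous_on UNIV D"
    "deriv \<phi> = D"
proof -
  from assms obtain D where D: "\<forall>x. (\<phi> has_vector_derivative D x) (at x)"
    and c: "continuous_on UNIV D"
    unfolding C1c_unit_def C1_differentiable_on_def by blast
  have d: "(\<phi> has_real_derivative D x) (at x)" for x
    using D by (simp add: has_real_derivative_iff_has_vector_derivative)
  show ?thesis
    by (rule that[OF d c]) (rule ext, rule DERIV_imp_deriv[OF d])
qed

lemma C1c_unitI: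
  fixes \<phi> :: "real \<Rightarrow> real"
  assumes "\<And>x. (\<phi> has_real_derivative D x) (at x)" "continuous_on UNIV D"
    and "\<And>x. x \<notin> {l..u} \<Longrightarrow> \<phi> x = 0" "{l..u} \<subseteq> U" "\<And>x. \<bar>\<phi> x\<bar> \<le> 1"
  shows "\<phi> \<in> C1c_unit U"
proof -
  have "{x. \<phi> x \<noteq> 0} \<subseteq> {l..u}" using assms(3) by blast
  then have "closure {x. \<phi> x \<noteq> 0} \<subseteq> {l..u}" by (simp add: closure_minimal)
  moreover then have "compact (closure {x. \<phi> x \<noteq> 0})"
    using bounded_subset[OF compact_imp_bounded[OF compact_Icc]]
    by (simp add: compact_eq_bounded_closed)
  moreover have "\<phi> C1_differentiable_on UNIV"
    unfolding C1_differentiable_on_def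
    using assms(1,2) by (auto simp: has_real_derivative_iff_has_vector_derivative)
  ultimately show ?thesis
    using assms(4,5) unfolding C1c_unit_def by auto
qed

lemma zero_in_C1c_unit: "(\<lambda>_. 0) \<in> C1c_unit U"
  by (rule C1c_unitI[where D="\<lambda>_. 0" and l=1 and u=0]) auto

lemma deriv_eq_0_outside_support:
  assumes "x \<notin> closure {x. \<phi> x \<noteq> (0::real)}"
  shows "deriv \<phi> x = 0"
proof -
  have "(\<phi> has_real_derivative 0) (at x)"
    by (rule has_field_derivative_transform_within_open[of "\<lambda>_. 0" _ _ "- closure {x. \<phi> x \<noteq> 0}"])
       (use assms closure_subset[of "{x. \<phi> x \<noteq> 0}"] in auto)
  then show ?thesis by (rule DERIV_imp_deriv)
qed

lemma C1c_unit_indicator_Int: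
  assumes "\<phi> \<in> C1c_unit U"
  shows "indicator (A \<inter> U) x * deriv \<phi> x = indicator A x * deriv \<phi> x"
  using C1c_unitD(2)[OF assms] deriv_eq_0_outside_support[of x \<phi>]
  by (cases "x \<in> U") (auto simp: indicator_def)

lemma integrable_indicator_mult_deriv:
  assumes "\<phi> \<in> C1c_unit U" "E \<in> sets lebesgue"
  shows "integrable lebesgue (\<lambda>x. indicator E x * deriv \<phi> x)"
proof -
  obtain D where "continuous_on UNIV D" "deriv \<phi> = D"
    using C1c_unit_derivative[OF assms(1)] by blast
  then have "continuous_on UNIV (deriv \<phi>)" by simp
  moreover have "bounded {x\<in>E. deriv \<phi> x \<noteq> 0}"
    by (rule bounded_subset[OF compact_imp_bounded[OF C1c_unitD(1)[OF assms(1)]]])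
       (use deriv_eq_0_outside_support in blast)
  ultimately show ?thesis
    by (rule integrable_indicator_mult_continuous[OF assms(2)])
qed

lemma Per_eq_SUP:
  "Per A U = (SUP \<phi>\<in>C1c_unit U. ereal (LINT x|lebesgue. indicator A x * deriv \<phi> x))"
  unfolding Per_def by (rule SUP_cong[OF refl]) (simp add: C1c_unit_indicator_Int)

lemma Per_ge_integral:
  "\<phi> \<in> C1c_unit U \<Longrightarrow> ereal (LINT x|lebesgue. indicator A x * deriv \<phi> x) \<le> Per A U"
  unfolding Per_eq_SUP by (rule SUP_upper)

lemma Per_leI:
  "(\<And>\<phi>. \<phi> \<in> C1c_unit U \<Longrightarrow> (LINT x|lebesgue. indicator A x * deriv \<phi> x) \<le> c) \<Longrightarrow> Per A U \<le> c"
  unfolding Per_eq_SUP by (rule SUP_least) simp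

lemma Per_nonneg: "0 \<le> Per A U"
  using Per_ge_integral[OF zero_in_C1c_unit, of A U] by (simp add: zero_ereal_def)

lemma C1c_unit_add:
  assumes \<phi>: "\<phi> \<in> C1c_unit U" and \<psi>: "\<psi> \<in> C1c_unit V" and "U \<inter> V = {}"
  shows "(\<lambda>x. \<phi> x + \<psi> x) \<in> C1c_unit (U \<union> V)"
    and "deriv (\<lambda>x. \<phi> x + \<psi> x) = (\<lambda>x. deriv \<phi> x + deriv \<psi> x)"
proof -
  obtain D where D: "\<And>x. (\<phi> has_real_derivative D x) (at x)" "continuous_on UNIV D" "deriv \<phi> = D"
    using C1c_unit_derivative[OF \<phi>] by blast
  obtain E where E: "\<And>x. (\<psi> has_real_derivative E x) (at x)" "continuous_on UNIV E" "deriv \<psi> = E"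
    using C1c_unit_derivative[OF \<psi>] by blast
  have d: "((\<lambda>x. \<phi> x + \<psi> x) has_real_derivative D x + E x) (at x)" for x
    by (intro DERIV_add D E)
  then show "deriv (\<lambda>x. \<phi> x + \<psi> x) = (\<lambda>x. deriv \<phi> x + deriv \<psi> x)"
    by (intro ext) (simp add: DERIV_imp_deriv[OF d] D(3) E(3))
  let ?S = "closure {x. \<phi> x \<noteq> 0}" and ?T = "closure {x. \<psi> x \<noteq> 0}"
  have "{x. \<phi> x + \<psi> x \<noteq> 0} \<subseteq> {x. \<phi> x \<noteq> 0} \<union> {x. \<psi> x \<noteq> 0}" by auto
  then have supp: "closure {x. \<phi> x + \<psi> x \<noteq> 0} \<subseteq> ?S \<union> ?T"
    by (metis closure_Un closure_mono)
  have "compact (?S \<union> ?T)"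
    using C1c_unitD(1)[OF \<phi>] C1c_unitD(1)[OF \<psi>] by blast
  then have "bounded (closure {x. \<phi> x + \<psi> x \<noteq> 0})"
    using bounded_subset[OF compact_imp_bounded supp] by blast
  then have "compact (closure {x. \<phi> x + \<psi> x \<noteq> 0})"
    by (simp add: compact_eq_bounded_closed)
  moreover have "closure {x. \<phi> x + \<psi> x \<noteq> 0} \<subseteq> U \<union> V"
    using supp C1c_unitD(2)[OF \<phi>] C1c_unitD(2)[OF \<psi>] by blast
  moreover have "\<bar>\<phi> x + \<psi> x\<bar> \<le> 1" for x
  proof -
    have "\<phi> x = 0 \<or> \<psi> x = 0"
      using closure_subset[of "{x. \<phi> x \<noteq> 0}"] closure_subset[of "{x. \<psi> x \<noteq> 0}"]
        C1c_unitD(2)[OF \<phi>] C1c_unitD(2)[OF \<psi>] \<open>U \<inter> V = {}\<close> by blast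
    then show ?thesis using C1c_unitD(3)[OF \<phi>] C1c_unitD(3)[OF \<psi>] by auto
  qed
  moreover have "(\<lambda>x. \<phi> x + \<psi> x) C1_differentiable_on UNIV"
    unfolding C1_differentiable_on_def using d D(2) E(2)
    by (intro exI[of _ "\<lambda>x. D x + E x"])
       (auto intro!: continuous_on_add simp: has_real_derivative_iff_has_vector_derivative)
  ultimately show "(\<lambda>x. \<phi> x + \<psi> x) \<in> C1c_unit (U \<union> V)"
    unfolding C1c_unit_def by blast
qed

lemma Per_superadditive:
  assumes A: "A \<in> sets lebesgue" and "U \<inter> V = {}" "U \<union> V \<subseteq> W"
  shows "Per A U + Per A V \<le> Per A W"
proof -
  let ?I = "\<lambda>\<phi>. ereal (LINT x|lebesgue. indicator A x * deriv \<phi> x)"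
  have sum_le: "?I \<phi> + ?I \<psi> \<le> Per A W" if \<phi>: "\<phi> \<in> C1c_unit U" and \<psi>: "\<psi> \<in> C1c_unit V" for \<phi> \<psi>
  proof -
    note sum = C1c_unit_add[OF \<phi> \<psi> \<open>U \<inter> V = {}\<close>]
    have "?I \<phi> + ?I \<psi> = ?I (\<lambda>x. \<phi> x + \<psi> x)"
      using integrable_indicator_mult_deriv[OF \<phi> A] integrable_indicator_mult_deriv[OF \<psi> A]
      by (simp add: sum(2) distrib_left)
    also have "\<dots> \<le> Per A (U \<union> V)" by (rule Per_ge_integral[OF sum(1)])
    also have "\<dots> \<le> Per A W"
      unfolding Per_eq_SUP using C1c_unit_mono[OF \<open>U \<union> V \<subseteq> W\<close>] by (rule SUP_subset_mono) simp
    finally show ?thesis .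
  qed
  have "Per A U + Per A V = (SUP \<phi>\<in>C1c_unit U. ?I \<phi> + Per A V)"
    unfolding Per_eq_SUP[of A U]
    by (rule SUP_ereal_add_left[symmetric]) (use zero_in_C1c_unit Per_nonneg in auto)
  also have "\<dots> \<le> Per A W"
  proof (rule SUP_least)
    fix \<phi> assume \<phi>: "\<phi> \<in> C1c_unit U"
    have "?I \<phi> + Per A V = (SUP \<psi>\<in>C1c_unit V. ?I \<phi> + ?I \<psi>)"
      unfolding Per_eq_SUP[of A V]
      by (rule SUP_ereal_add_right[symmetric]) (use zero_in_C1c_unit in auto)
    also have "\<dots> \<le> Per A W" by (rule SUP_least) (rule sum_le[OF \<phi>])
    finally show "?I \<phi> + Per A V \<le> Per A W" .
  qed
  finally show ?thesis .
qed

section \<open>Density points and a lower bound for the perimeter\<close>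

definition density_point :: "real set \<Rightarrow> real \<Rightarrow> bool" where
  "density_point A x \<longleftrightarrow>
     (\<forall>e>0. \<forall>r>0. \<exists>d. 0 < d \<and> d \<le> r \<and> measure lebesgue (ball x d - A) < e * d)"

lemma measure_ball_real: "(d::real) \<ge> 0 \<Longrightarrow> measure lebesgue (ball (x::real) d) = 2 * d"
  by (simp add: ball_eq_greaterThanLessThan measure_completion)

lemma not_negligible_ball_real: "(r::real) > 0 \<Longrightarrow> \<not> negligible (ball (x::real) r)"
  using negligible_imp_measure0 measure_ball_real by fastforce

lemma measure_disjoint_balls_le:
  fixes c r :: "'i \<Rightarrow> real"
  assumes A: "A \<in> sets lebesgue" and "\<epsilon> > 0" and I: "finite I"
    and disj: "pairwise (\<lambda>i j. disjnt (ball (c i) (r i)) (ball (c j) (r j))) I"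
    and big: "\<And>i. i \<in> I \<Longrightarrow> 0 < r i \<and> \<epsilon> * r i \<le> measure lebesgue (ball (c i) (r i) - A)"
  shows "measure lebesgue (\<Union>i\<in>I. ball (c i) (r i))
           \<le> 2 / \<epsilon> * measure lebesgue (\<Union>i\<in>I. ball (c i) (r i) - A)"
proof -
  have disj': "pairwise (\<lambda>i j. disjnt (ball (c i) (r i) - A) (ball (c j) (r j) - A)) I"
    using disj unfolding pairwise_def disjnt_def by blast
  have "measure lebesgue (\<Union>i\<in>I. ball (c i) (r i)) = (\<Sum>i\<in>I. measure lebesgue (ball (c i) (r i)))"
    by (rule measure_UNION'[OF I _ disj]) simp
  also have "\<dots> \<le> (\<Sum>i\<in>I. 2 / \<epsilon> * measure lebesgue (ball (c i) (r i) - A))"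
  proof (rule sum_mono)
    fix i assume "i \<in> I"
    then have "0 < r i" "\<epsilon> * r i \<le> measure lebesgue (ball (c i) (r i) - A)"
      using big by auto
    then show "measure lebesgue (ball (c i) (r i))
        \<le> 2 / \<epsilon> * measure lebesgue (ball (c i) (r i) - A)"
      using measure_ball_real[of "r i" "c i"] \<open>\<epsilon> > 0\<close> by (simp add: field_simps)
  qed
  also have "\<dots> = 2 / \<epsilon> * (\<Sum>i\<in>I. measure lebesgue (ball (c i) (r i) - A))"
    by (simp add: sum_distrib_left)
  also have "(\<Sum>i\<in>I. measure lebesgue (ball (c i) (r i) - A))
      = measure lebesgue (\<Union>i\<in>I. ball (c i) (r i) - A)"
    by (rule measure_UNION'[OF I _ disj', symmetric]) (use A in \<open>auto intro: fmeasurable_Diff\<close>)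
  finally show ?thesis .
qed

lemma exists_lmeasurable_superset_measure_le:
  assumes C: "countable C" and neg: "negligible (S - (\<Union>i\<in>C. B i))"
    and B: "\<And>i. i \<in> C \<Longrightarrow> B i \<in> lmeasurable"
    and bound: "\<And>I. I \<subseteq> C \<Longrightarrow> finite I \<Longrightarrow> measure lebesgue (\<Union>i\<in>I. B i) \<le> \<eta>"
  shows "\<exists>T. S \<subseteq> T \<and> T \<in> lmeasurable \<and> measure lebesgue T \<le> \<eta>"
proof (intro exI conjI)
  let ?U = "\<Union>i\<in>C. B i"
  have U: "?U \<in> lmeasurable" "measure lebesgue ?U \<le> \<eta>"
    using fmeasurable_UN_bound[OF C B bound] measure_UN_bound[OF C B bound] by auto
  show "S \<subseteq> (S - ?U) \<union> ?U" by blast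
  show "(S - ?U) \<union> ?U \<in> lmeasurable"
    by (rule fmeasurable.Un[OF negligible_imp_measurable[OF neg] U(1)])
  have "measure lebesgue ((S - ?U) \<union> ?U) = measure lebesgue ?U"
    by (rule measure_negligible_symdiff[OF U(1)]) (force intro: negligible_subset[OF neg])
  then show "measure lebesgue ((S - ?U) \<union> ?U) \<le> \<eta>" using U(2) by simp
qed

text \<open>A Vitali covering argument: S is covered, up to a null set, by disjoint balls B
  contained in an open neighbourhood G of A, and each B has measure at most 2/\<epsilon> times
  that of B - A, so their total measure is controlled by that of G - A.\<close>

lemma negligible_if_complement_density_ge:
  fixes A S :: "real set"
  assumes A: "A \<in> sets lebesgue" and "\<epsilon> > 0" and "S \<subseteq> A"
    and big: "\<And>x. x \<in> S \<Longrightarrow> \<exists>r>0. \<forall>d. 0 < d \<and> d \<le> r \<longrightarrow> \<epsilon> * d \<le> measure lebesgue (ball x d - A)"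
  shows "negligible S"
  unfolding negligible_outer_le
proof (intro allI impI)
  fix \<eta> :: real assume "\<eta> > 0"
  obtain G where G: "open G" "A \<subseteq> G" "G - A \<in> lmeasurable"
      "emeasure lebesgue (G - A) < ennreal (\<epsilon> * \<eta> / 2)"
    using sets_lebesgue_outer_open[OF A, of "\<epsilon> * \<eta> / 2"] \<open>\<epsilon> > 0\<close> \<open>\<eta> > 0\<close> by auto
  have GA: "measure lebesgue (G - A) \<le> \<epsilon> * \<eta> / 2"
    using G(3,4) \<open>\<epsilon> > 0\<close> \<open>\<eta> > 0\<close>
    by (metis emeasure_eq_measure2 ennreal_less_iff less_eq_real_def measure_nonneg)
  define K where "K = {(x, d). x \<in> S \<and> 0 < d \<and> ball x d \<subseteq> G \<and>
                       \<epsilon> * d \<le> measure lebesgue (ball x d - A)}"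
  obtain C where C: "countable C" "C \<subseteq> K"
     and disj: "pairwise (\<lambda>i j. disjnt (ball (fst i) (snd i)) (ball (fst j) (snd j))) C"
     and negC: "negligible (S - (\<Union>i\<in>C. ball (fst i) (snd i)))"
  proof (rule Vitali_covering_theorem_balls[of S K fst snd])
    fix x and \<delta> :: real assume x: "x \<in> S" and "0 < \<delta>"
    obtain k where k: "k > 0" "ball x k \<subseteq> G"
      using x \<open>S \<subseteq> A\<close> G(1,2) open_contains_ball by blast
    obtain r where r: "r > 0" "\<And>d. 0 < d \<and> d \<le> r \<Longrightarrow> \<epsilon> * d \<le> measure lebesgue (ball x d - A)"
      using big[OF x] by blast
    define d where "d = min (min k r) \<delta> / 2"
    have d: "0 < d" "d \<le> r" "d < \<delta>" "d \<le> k" using k r \<open>0 < \<delta>\<close> by (auto simp: d_def)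
    then have "(x, d) \<in> K"
      unfolding K_def using x r(2)[of d] k(2) by auto
    then show "\<exists>i. i \<in> K \<and> x \<in> ball (fst i) (snd i) \<and> snd i < \<delta>"
      using d by (intro exI[of _ "(x,d)"]) auto
  qed
  have bound: "measure lebesgue (\<Union>i\<in>I. ball (fst i) (snd i)) \<le> \<eta>" if I: "I \<subseteq> C" "finite I" for I
  proof -
    have "measure lebesgue (\<Union>i\<in>I. ball (fst i) (snd i))
           \<le> 2 / \<epsilon> * measure lebesgue (\<Union>i\<in>I. ball (fst i) (snd i) - A)"
      using C(2) I
      by (intro measure_disjoint_balls_le[OF A \<open>\<epsilon> > 0\<close>]) (auto simp: K_def intro: pairwise_subset[OF disj])
    also have "\<dots> \<le> 2 / \<epsilon> * measure lebesgue (G - A)"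
    proof -
      have "(\<Union>i\<in>I. ball (fst i) (snd i)) \<subseteq> G" using C(2) I(1) by (force simp: K_def)
      then show ?thesis
        using I(2) A \<open>\<epsilon> > 0\<close>
        by (intro mult_left_mono measure_mono_fmeasurable[OF _ _ G(3)] sets.finite_UN) auto
    qed
    also have "\<dots> \<le> \<eta>"
      using GA \<open>\<epsilon> > 0\<close> by (simp add: field_simps)
    finally show ?thesis .
  qed
  show "\<exists>T. S \<subseteq> T \<and> T \<in> lmeasurable \<and> measure lebesgue T \<le> \<eta>"
    using bound by (intro exists_lmeasurable_superset_measure_le[OF C(1) negC]) auto
qed

lemma negligible_non_density_points:
  assumes A: "A \<in> sets lebesgue"
  shows "negligible {x\<in>A. \<not> density_point A x}"
proof -
  define S where "S n = {x \<in> A. \<exists>r>0. \<forall>d. 0 < d \<and> d \<le> r \<longrightarrow>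
                          inverse (real (Suc n)) * d \<le> measure lebesgue (ball x d - A)}" for n
  have "negligible (S n)" for n
    by (rule negligible_if_complement_density_ge[OF A]) (auto simp: S_def)
  then have "negligible (\<Union>n. S n)"
    by (intro negligible_countable_Union) auto
  moreover have "{x\<in>A. \<not> density_point A x} \<subseteq> (\<Union>n. S n)"
  proof
    fix x assume x: "x \<in> {x\<in>A. \<not> density_point A x}"
    then obtain e r where "e > 0" "r > 0"
      and er: "\<forall>d. 0 < d \<and> d \<le> r \<longrightarrow> \<not> measure lebesgue (ball x d - A) < e * d"
      unfolding density_point_def by blast
    obtain n where n: "inverse (real (Suc n)) < e" using reals_Archimedean[OF \<open>e > 0\<close>] by blast
    have "inverse (real (Suc n)) * d \<le> measure lebesgue (ball x d - A)" if "0 < d \<and> d \<le> r" for d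
    proof -
      have "inverse (real (Suc n)) * d \<le> e * d" using n that by (intro mult_right_mono) auto
      also have "\<dots> \<le> measure lebesgue (ball x d - A)" using er that by (auto simp: not_less)
      finally show ?thesis .
    qed
    then have "x \<in> S n" using x \<open>r > 0\<close> unfolding S_def by blast
    then show "x \<in> (\<Union>n. S n)" by blast
  qed
  ultimately show ?thesis by (rule negligible_subset)
qed

lemma not_negligible_density_points:
  assumes A: "A \<in> sets lebesgue" and "\<not> negligible (A \<inter> U)"
  shows "\<not> negligible {x \<in> A \<inter> U. density_point A x}"
proof
  assume "negligible {x \<in> A \<inter> U. density_point A x}"
  then have "negligible ({x \<in> A \<inter> U. density_point A x} \<union> {x\<in>A. \<not> density_point A x})"
    using negligible_non_density_points[OF A] by (rule negligible_Un)
  then show False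
    using \<open>\<not> negligible (A \<inter> U)\<close> negligible_subset by blast
qed

lemma density_point_exists:
  assumes "A \<in> sets lebesgue" "\<not> negligible (A \<inter> U)"
  obtains x where "x \<in> A \<inter> U" "density_point A x"
proof -
  have "{x \<in> A \<inter> U. density_point A x} \<noteq> {}"
  proof
    assume "{x \<in> A \<inter> U. density_point A x} = {}"
    with not_negligible_density_points[OF assms] show False
      by (simp only: negligible_empty not_True_eq_False)
  qed
  then show ?thesis using that by blast
qed

lemma Per_ge_ramp_difference:
  assumes A: "A \<in> sets lebesgue" and d: "d > 0" "d' > 0"
    and balls: "cball b d \<subseteq> {p<..<q}" "cball c d' \<subseteq> {p<..<q}"
  shows "ereal (1 - 3 / (4*d) * measure lebesgue (ball b d - A)
            - 3 / (4*d') * measure lebesgue (A \<inter> ball c d')) \<le> Per A {p<..<q}"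
proof -
  define \<phi> where "\<phi> x = ramp b d x - ramp c d' x" for x
  define D where "D x = ramp_deriv b d x - ramp_deriv c d' x" for x
  have \<phi>': "(\<phi> has_real_derivative D x) (at x)" for x
    unfolding \<phi>_def D_def using d by (intro DERIV_diff has_real_derivative_ramp)
  have "b - d \<in> {p<..<q}" "b + d \<in> {p<..<q}" "c - d' \<in> {p<..<q}" "c + d' \<in> {p<..<q}"
    using subsetD[OF balls(1), of "b - d"] subsetD[OF balls(1), of "b + d"]
      subsetD[OF balls(2), of "c - d'"] subsetD[OF balls(2), of "c + d'"] d
    by (simp_all add: dist_real_def)
  then have "p < b - d" "b + d < q" "p < c - d'" "c + d' < q"
    by auto
  then have lu: "{min (b-d) (c-d')..max (b+d) (c+d')} \<subseteq> {p<..<q}"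
    using d by auto
  have \<phi>C: "\<phi> \<in> C1c_unit {p<..<q}"
  proof (rule C1c_unitI[OF \<phi>' _ _ lu])
    show "continuous_on UNIV D"
      unfolding D_def using d by (intro continuous_on_diff continuous_on_ramp_deriv)
    show "\<phi> x = 0" if "x \<notin> {min (b-d) (c-d')..max (b+d) (c+d')}" for x
      using that ramp_eq_0[OF d(1), of x b] ramp_eq_0[OF d(2), of x c]
        ramp_eq_1[OF d(1), of b x] ramp_eq_1[OF d(2), of c x]
      by (auto simp: \<phi>_def)
    show "\<bar>\<phi> x\<bar> \<le> 1" for x
      unfolding \<phi>_def using ramp_bounds[of b d x] ramp_bounds[of c d' x] by auto
  qed
  have "deriv \<phi> = D" by (intro ext DERIV_imp_deriv \<phi>')
  then have "(LINT x|lebesgue. indicator A x * deriv \<phi> x)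
      = (LINT x|lebesgue. indicator A x * ramp_deriv b d x - indicator A x * ramp_deriv c d' x)"
    by (simp add: D_def right_diff_distrib)
  also have "\<dots> = (LINT x|lebesgue. indicator A x * ramp_deriv b d x)
        - (LINT x|lebesgue. indicator A x * ramp_deriv c d' x)"
    using A d by (intro Bochner_Integration.integral_diff integrable_ramp_deriv)
  finally have "1 - 3 / (4*d) * measure lebesgue (ball b d - A)
      - 3 / (4*d') * measure lebesgue (A \<inter> ball c d')
      \<le> (LINT x|lebesgue. indicator A x * deriv \<phi> x)"
    using integral_ramp_deriv_ge[OF d(1) A, of b] integral_ramp_deriv_le[OF d(2) A, of c] by linarith
  then have "ereal (1 - 3 / (4*d) * measure lebesgue (ball b d - A)
      - 3 / (4*d') * measure lebesgue (A \<inter> ball c d'))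
      \<le> ereal (LINT x|lebesgue. indicator A x * deriv \<phi> x)"
    by simp
  also have "\<dots> \<le> Per A {p<..<q}" by (rule Per_ge_integral[OF \<phi>C])
  finally show ?thesis .
qed

lemma one_le_Per_near_density_points:
  assumes A: "A \<in> sets lebesgue" and "density_point A b" "density_point (- A) c"
    and "b \<in> {p<..<q}" "c \<in> {p<..<q}"
  shows "1 \<le> Per A {p<..<q}"
proof (rule ereal_le_epsilon2)
  fix \<epsilon> :: real assume "0 < \<epsilon>"
  define r where "r = min (min (b-p) (q-b)) (min (c-p) (q-c)) / 2"
  have "r > 0" using assms(4,5) by (simp add: r_def)
  obtain d where d: "0 < d" "d \<le> r" "measure lebesgue (ball b d - A) < \<epsilon>/2 * d"
    using \<open>density_point A b\<close> half_gt_zero[OF \<open>0 < \<epsilon>\<close>] \<open>r > 0\<close>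
    unfolding density_point_def by blast
  obtain d' where d': "0 < d'" "d' \<le> r" "measure lebesgue (ball c d' - - A) < \<epsilon>/2 * d'"
    using \<open>density_point (- A) c\<close> half_gt_zero[OF \<open>0 < \<epsilon>\<close>] \<open>r > 0\<close>
    unfolding density_point_def by blast
  have balls: "cball b d \<subseteq> {p<..<q}" "cball c d' \<subseteq> {p<..<q}"
    using d(1,2) d'(1,2) by (auto simp: r_def dist_real_def abs_le_iff)
  have "3 / (4*d) * measure lebesgue (ball b d - A) \<le> 3 / (4*d) * (\<epsilon>/2 * d)"
    using d by (intro mult_left_mono) auto
  also have "\<dots> \<le> \<epsilon>/2" using d \<open>0 < \<epsilon>\<close> by simp
  finally have bd: "3 / (4*d) * measure lebesgue (ball b d - A) \<le> \<epsilon>/2" .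
  have "ball c d' - - A = A \<inter> ball c d'" by auto
  then have "3 / (4*d') * measure lebesgue (A \<inter> ball c d') \<le> 3 / (4*d') * (\<epsilon>/2 * d')"
    using d' by (intro mult_left_mono) auto
  also have "\<dots> \<le> \<epsilon>/2" using d' \<open>0 < \<epsilon>\<close> by simp
  finally have bd': "3 / (4*d') * measure lebesgue (A \<inter> ball c d') \<le> \<epsilon>/2" .
  have "ereal (1 - \<epsilon>) \<le> ereal (1 - 3 / (4*d) * measure lebesgue (ball b d - A)
            - 3 / (4*d') * measure lebesgue (A \<inter> ball c d'))"
    using bd bd' by simp
  also have "\<dots> \<le> Per A {p<..<q}"
    by (rule Per_ge_ramp_difference[OF A d(1) d'(1) balls])
  finally have "ereal (1 - \<epsilon>) + ereal \<epsilon> \<le> Per A {p<..<q} + ereal \<epsilon>"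
    by (rule add_right_mono)
  then show "1 \<le> Per A {p<..<q} + ereal \<epsilon>"
    by (simp add: one_ereal_def)
qed

section \<open>The essential support\<close>

definition essential_support :: "real set \<Rightarrow> real set" where
  "essential_support A = {x. \<forall>r>0. \<not> negligible (A \<inter> ball x r)}"

definition jump_point :: "real set \<Rightarrow> real \<Rightarrow> bool" where
  "jump_point A x \<longleftrightarrow> (\<forall>p q. p < x \<longrightarrow> x < q \<longrightarrow> 1 \<le> Per A {p<..<q})"

lemma closed_essential_support: "closed (essential_support A)"
  unfolding closed_def open_contains_ball
proof
  fix x assume "x \<in> - essential_support A"
  then obtain r where r: "r > 0" "negligible (A \<inter> ball x r)"
    unfolding essential_support_def by auto
  have "ball x r \<subseteq> - essential_support A"
  proof
    fix y assume y: "y \<in> ball x r"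
    then have "r - dist x y > 0" "ball y (r - dist x y) \<subseteq> ball x r"
      by (auto simp: ball_subset_ball_iff dist_commute)
    moreover from this(2) have "negligible (A \<inter> ball y (r - dist x y))"
      using negligible_subset[OF r(2)] by blast
    ultimately show "y \<in> - essential_support A"
      unfolding essential_support_def by blast
  qed
  then show "\<exists>e>0. ball x e \<subseteq> - essential_support A" using r by blast
qed

lemma Compl_in_sets_lebesgue: "A \<in> sets lebesgue \<Longrightarrow> - A \<in> sets lebesgue"
  by (metis Compl_eq_Diff_UNIV sets.compl_sets space_borel space_completion space_lborel)

lemma negligible_Int_if_locally_negligible:
  assumes "\<And>y. y \<in> S \<Longrightarrow> \<exists>r>0. negligible (A \<inter> ball y r)"
  shows "negligible (A \<inter> S)"
  unfolding locally_negligible_alt[of "A \<inter> S"]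
proof
  fix x assume x: "x \<in> A \<inter> S"
  then obtain r where r: "r > 0" "negligible (A \<inter> ball x r)" using assms by blast
  show "\<exists>U. openin (top_of_set (A \<inter> S)) U \<and> x \<in> U \<and> negligible U"
  proof (intro exI conjI)
    show "openin (top_of_set (A \<inter> S)) (A \<inter> S \<inter> ball x r)" by (simp add: openin_open_Int)
    show "x \<in> A \<inter> S \<inter> ball x r" using x r by simp
    show "negligible (A \<inter> S \<inter> ball x r)" using r(2) by (rule negligible_subset) auto
  qed
qed

lemma negligible_diff_essential_support: "negligible (A - essential_support A)"
  using negligible_Int_if_locally_negligible[of "- essential_support A" A]
  by (auto simp: essential_support_def Diff_eq)

lemma density_point_near_essential_support:
  assumes "A \<in> sets lebesgue" "x \<in> essential_support A" "r > 0"
  obtains b where "b \<in> ball x r" "density_point A b"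
  using density_point_exists[OF assms(1)] assms(2,3) unfolding essential_support_def by blast

lemma jump_point_if_density_points_near:
  assumes A: "A \<in> sets lebesgue"
    and "\<And>r. r > 0 \<Longrightarrow> \<exists>b\<in>ball x r. density_point A b"
    and "\<And>r. r > 0 \<Longrightarrow> \<exists>c\<in>ball x r. density_point (- A) c"
  shows "jump_point A x"
  unfolding jump_point_def
proof (intro allI impI)
  fix p q assume "p < x" "x < q"
  then have "min (x - p) (q - x) > 0" "ball x (min (x - p) (q - x)) \<subseteq> {p<..<q}"
    by (auto simp: dist_real_def)
  then show "1 \<le> Per A {p<..<q}"
    using assms(2,3) one_le_Per_near_density_points[OF A] by blast
qed

lemma jump_point_if_frontier_essential_support:
  assumes A: "A \<in> sets lebesgue" and x: "x \<in> frontier (essential_support A)"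
  shows "jump_point A x"
proof (rule jump_point_if_density_points_near[OF A])
  fix r :: real assume "r > 0"
  have "x \<in> essential_support A"
    using x frontier_subset_closed[OF closed_essential_support] by blast
  then show "\<exists>b\<in>ball x r. density_point A b"
    using density_point_near_essential_support[OF A _ \<open>r > 0\<close>] by blast
  have "x \<notin> interior (essential_support A)" using x by (simp add: frontier_def)
  then have "\<not> ball x r \<subseteq> essential_support A"
    using interior_maximal[OF _ open_ball] centre_in_ball \<open>r > 0\<close> by blast
  then obtain y s where y: "y \<in> ball x r" and "s > 0" "negligible (A \<inter> ball y s)"
    unfolding essential_support_def by blast
  define t where "t = min s (r - dist x y)"
  have "t > 0" using \<open>s > 0\<close> y by (simp add: t_def)
  have t: "ball y t \<subseteq> ball x r" "ball y t \<subseteq> ball y s"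
    by (auto simp: t_def ball_subset_ball_iff dist_commute)
  have "- A \<in> sets lebesgue" using A by (rule Compl_in_sets_lebesgue)
  moreover have "\<not> negligible (- A \<inter> ball y t)"
  proof
    assume "negligible (- A \<inter> ball y t)"
    moreover have "negligible (A \<inter> ball y t)"
      using negligible_subset[OF \<open>negligible (A \<inter> ball y s)\<close>] t(2) by blast
    ultimately have "negligible ((A \<inter> ball y t) \<union> (- A \<inter> ball y t))"
      by (intro negligible_Un)
    moreover have "(A \<inter> ball y t) \<union> (- A \<inter> ball y t) = ball y t" by blast
    ultimately have "negligible (ball y t)" by simp
    then show False using not_negligible_ball_real[OF \<open>t > 0\<close>] by blast
  qed
  ultimately obtain c where "c \<in> - A \<inter> ball y t" "density_point (- A) c"
    by (rule density_point_exists)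
  then show "\<exists>c\<in>ball x r. density_point (- A) c" using t(1) by blast
qed

lemma card_jump_points_le_Per:
  assumes A: "A \<in> sets lebesgue" and "finite F" "F \<subseteq> {a<..<b}" "\<And>x. x \<in> F \<Longrightarrow> jump_point A x"
  shows "ereal (card F) \<le> Per A {a<..<b}"
  using assms(2-4)
proof (induction F arbitrary: b rule: finite_linorder_max_induct)
  case empty
  then show ?case using Per_nonneg[of A "{a<..<b}"] by (simp add: zero_ereal_def)
next
  case (insert x F)
  have "a < x" "x < b" using insert.prems(1) by auto
  define m where "m = (Max (insert a F) + x) / 2"
  have "Max (insert a F) < x" using insert.hyps(1,2) \<open>a < x\<close> by simp
  moreover have "y \<le> Max (insert a F)" if "y \<in> insert a F" for y
    using insert.hyps(1) that by simp
  ultimately have m: "a < m" "m < x" "F \<subseteq> {a<..<m}"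
    using insert.prems(1) by (fastforce simp: m_def)+
  have "x \<notin> F" using insert.hyps(2) by blast
  then have "ereal (card (insert x F)) = ereal (card F) + 1"
    using insert.hyps(1) by (simp add: one_ereal_def)
  also have "\<dots> \<le> Per A {a<..<m} + Per A {m<..<b}"
  proof (rule add_mono)
    show "ereal (card F) \<le> Per A {a<..<m}"
      using insert.IH[of m] m(3) insert.prems(2) by blast
    show "1 \<le> Per A {m<..<b}"
      using insert.prems(2)[of x] m(2) \<open>x < b\<close> unfolding jump_point_def by blast
  qed
  also have "\<dots> \<le> Per A {a<..<b}"
    using m \<open>x < b\<close> by (intro Per_superadditive[OF A]) auto
  finally show ?case .
qed

lemma finite_jump_points:
  assumes A: "A \<in> sets lebesgue" and "Per A {a<..<b} < \<infinity>"
  shows "finite ({x. jump_point A x} \<inter> {a<..<b})"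
proof (rule ccontr)
  assume "infinite ({x. jump_point A x} \<inter> {a<..<b})"
  obtain v where v: "Per A {a<..<b} = ereal v"
    using assms(2) Per_nonneg[of A "{a<..<b}"] by (cases "Per A {a<..<b}") auto
  obtain N :: nat where "v < N" using reals_Archimedean2 by blast
  obtain F where "finite F" "card F = N" "F \<subseteq> {x. jump_point A x} \<inter> {a<..<b}"
    using infinite_arbitrarily_large[OF \<open>infinite _\<close>] by blast
  then have "ereal N \<le> Per A {a<..<b}"
    using card_jump_points_le_Per[OF A, of F a b] by auto
  then show False using v \<open>v < N\<close> by simp
qed

lemma finite_frontier_essential_support:
  assumes "A \<in> sets lebesgue" "Per A {a<..<b} < \<infinity>"
  shows "finite (frontier (essential_support A) \<inter> {a<..<b})"
proof -
  have "frontier (essential_support A) \<inter> {a<..<b} \<subseteq> {x. jump_point A x} \<inter> {a<..<b}"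
    using jump_point_if_frontier_essential_support[OF assms(1)] by blast
  then show ?thesis using finite_jump_points[OF assms] by (rule finite_subset)
qed

lemma negligible_frontier_essential_support:
  assumes A: "A \<in> sets lebesgue" and fin: "\<And>a b. Per A {a<..<b} < \<infinity>"
  shows "negligible (frontier (essential_support A))"
proof -
  have "\<exists>n. - real n < y \<and> y < real n" for y :: real
  proof -
    obtain n :: nat where "\<bar>y\<bar> < n" using reals_Archimedean2 by blast
    then show ?thesis by (intro exI[of _ n]) (auto simp: abs_less_iff)
  qed
  then have "frontier (essential_support A) = (\<Union>n. frontier (essential_support A) \<inter> {- real n<..<real n})"
    by auto
  moreover have "negligible (\<Union>n. frontier (essential_support A) \<inter> {- real n<..<real n})"
    using finite_frontier_essential_support[OF A fin] by (intro negligible_countable_Union) auto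
  ultimately show ?thesis by simp
qed

text \<open>Inside the essential support, every density point of the complement is a jump point;
  there are only finitely many of them locally, so the complement is negligible there.\<close>

lemma negligible_essential_support_diff:
  assumes A: "A \<in> sets lebesgue" and fin: "\<And>a b. Per A {a<..<b} < \<infinity>"
  shows "negligible (essential_support A - A)"
proof -
  have "negligible (- A \<inter> interior (essential_support A))"
  proof (rule negligible_Int_if_locally_negligible)
    fix x assume "x \<in> interior (essential_support A)"
    then obtain r where "r > 0" and r: "ball x r \<subseteq> essential_support A"
      by (auto simp: mem_interior)
    have "jump_point A c" if c: "c \<in> - A \<inter> ball x r" "density_point (- A) c" for c
    proof (rule jump_point_if_density_points_near[OF A])
      fix s :: real assume "s > 0"
      have "ball c (min s (r - dist x c)) \<subseteq> ball c s"
           "ball c (min s (r - dist x c)) \<subseteq> ball x r"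
        by (auto simp: ball_subset_ball_iff dist_commute)
      moreover have "min s (r - dist x c) > 0" using \<open>s > 0\<close> c(1) by simp
      ultimately show "\<exists>b\<in>ball c s. density_point A b"
        using density_point_near_essential_support[OF A, of c] c(1) r by blast
      show "\<exists>c'\<in>ball c s. density_point (- A) c'" using c(2) \<open>s > 0\<close> by force
    qed
    then have "{c \<in> - A \<inter> ball x r. density_point (- A) c} \<subseteq> {y. jump_point A y} \<inter> {x-r<..<x+r}"
      by (auto simp: dist_real_def)
    moreover have "finite ({y. jump_point A y} \<inter> {x-r<..<x+r})"
      using finite_jump_points[OF A fin] .
    ultimately have "negligible {c \<in> - A \<inter> ball x r. density_point (- A) c}"
      using finite_subset negligible_finite by blast
    moreover have "- A \<in> sets lebesgue" using A by (rule Compl_in_sets_lebesgue)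
    ultimately show "\<exists>r>0. negligible (- A \<inter> ball x r)"
      using not_negligible_density_points \<open>r > 0\<close> by blast
  qed
  moreover have "essential_support A - A
      \<subseteq> frontier (essential_support A) \<union> (- A \<inter> interior (essential_support A))"
    using closed_essential_support[of A] by (auto simp: frontier_def)
  ultimately show ?thesis
    using negligible_frontier_essential_support[OF A fin]
    by (meson negligible_Un negligible_subset)
qed

section \<open>An upper bound for the perimeter and the perimeter formula\<close>

lemma Ioo_subset_or_disjoint_if_no_frontier:
  fixes Z :: "real set"
  assumes "{u<..<v} \<inter> frontier Z = {}"
  shows "{u<..<v} \<subseteq> Z \<or> {u<..<v} \<inter> Z = {}"
  using connected_Int_frontier[OF connected_Ioo[of u v], of Z] assms by blast

lemma eventually_mem_iff_at_right:
  fixes Z :: "real set"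
  assumes fin: "finite (frontier Z \<inter> {u<..<v})" and "u < v"
  obtains c where "eventually (\<lambda>y. y \<in> Z \<longleftrightarrow> c) (at_right u)"
proof -
  have "eventually (\<lambda>y. \<forall>a\<in>frontier Z \<inter> {u<..<v}. y \<noteq> a) (at_right u)"
    by (rule eventually_ball_finite[OF fin]) (simp add: eventually_neq_at_within)
  with eventually_at_right_real[OF \<open>u < v\<close>]
  have "eventually (\<lambda>y. y \<in> {u<..<v} \<and> (\<forall>a\<in>frontier Z \<inter> {u<..<v}. y \<noteq> a)) (at_right u)"
    by (rule eventually_conj)
  then obtain w where "w > u" and "\<And>y. u < y \<Longrightarrow> y < w \<Longrightarrow> y \<notin> frontier Z"
    unfolding eventually_at_right_field by blast
  then have "{u<..<w} \<subseteq> Z \<or> {u<..<w} \<inter> Z = {}"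
    by (intro Ioo_subset_or_disjoint_if_no_frontier) auto
  then show ?thesis
  proof
    assume "{u<..<w} \<subseteq> Z"
    then show ?thesis using \<open>w > u\<close> by (intro that[of True] eventually_at_rightI[of u w]) auto
  next
    assume "{u<..<w} \<inter> Z = {}"
    then show ?thesis using \<open>w > u\<close> by (intro that[of False] eventually_at_rightI[of u w]) auto
  qed
qed

lemma eventually_mem_iff_at_left:
  fixes Z :: "real set"
  assumes fin: "finite (frontier Z \<inter> {u<..<v})" and "u < v"
  obtains c where "eventually (\<lambda>y. y \<in> Z \<longleftrightarrow> c) (at_left v)"
proof -
  have "eventually (\<lambda>y. \<forall>a\<in>frontier Z \<inter> {u<..<v}. y \<noteq> a) (at_left v)"
    by (rule eventually_ball_finite[OF fin]) (simp add: eventually_neq_at_within)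
  with eventually_at_left_real[OF \<open>u < v\<close>]
  have "eventually (\<lambda>y. y \<in> {u<..<v} \<and> (\<forall>a\<in>frontier Z \<inter> {u<..<v}. y \<noteq> a)) (at_left v)"
    by (rule eventually_conj)
  then obtain w where "w < v" and "\<And>y. w < y \<Longrightarrow> y < v \<Longrightarrow> y \<notin> frontier Z"
    unfolding eventually_at_left_field by blast
  then have "{w<..<v} \<subseteq> Z \<or> {w<..<v} \<inter> Z = {}"
    by (intro Ioo_subset_or_disjoint_if_no_frontier) auto
  then show ?thesis
  proof
    assume "{w<..<v} \<subseteq> Z"
    then show ?thesis using \<open>w < v\<close> by (intro that[of True] eventually_at_leftI[of w v]) auto
  next
    assume "{w<..<v} \<inter> Z = {}"
    then show ?thesis using \<open>w < v\<close> by (intro that[of False] eventually_at_leftI[of w v]) auto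
  qed
qed

lemma integrable_indicator_Int_Ioo_mult_continuous:
  fixes D :: "real \<Rightarrow> real"
  assumes "Z \<in> sets lebesgue" "continuous_on UNIV D"
  shows "integrable lebesgue (\<lambda>x. indicator (Z \<inter> {u<..<v}) x * D x)"
  using assms by (intro integrable_indicator_mult_continuous) (auto intro: bounded_subset[of "{u..v}"])

lemma integral_indicator_Int_Ioo_split:
  fixes D :: "real \<Rightarrow> real"
  assumes Z: "Z \<in> sets lebesgue" and D: "continuous_on UNIV D" and "u < x" "x < v"
  shows "(LINT y|lebesgue. indicator (Z \<inter> {u<..<v}) y * D y)
      = (LINT y|lebesgue. indicator (Z \<inter> {u<..<x}) y * D y)
      + (LINT y|lebesgue. indicator (Z \<inter> {x<..<v}) y * D y)"
proof -
  have int: "integrable lebesgue (\<lambda>y. indicator (Z \<inter> {a<..<b}) y * D y)" for a b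
    by (rule integrable_indicator_Int_Ioo_mult_continuous[OF Z D])
  have "(LINT y|lebesgue. indicator (Z \<inter> {u<..<v}) y * D y)
      = (LINT y|lebesgue. indicator (Z \<inter> {u<..<x}) y * D y + indicator (Z \<inter> {x<..<v}) y * D y)"
  proof (rule integral_cong_AE)
    show "AE y in lebesgue. indicator (Z \<inter> {u<..<v}) y * D y
        = indicator (Z \<inter> {u<..<x}) y * D y + indicator (Z \<inter> {x<..<v}) y * D y"
      using AE_completion[OF AE_lborel_singleton[of x]]
      by eventually_elim (use assms in \<open>auto simp: indicator_def\<close>)
  qed (use int in \<open>auto intro: borel_measurable_integrable\<close>)
  also have "\<dots> = (LINT y|lebesgue. indicator (Z \<inter> {u<..<x}) y * D y)
      + (LINT y|lebesgue. indicator (Z \<inter> {x<..<v}) y * D y)"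
    by (rule Bochner_Integration.integral_add[OF int int])
  finally show ?thesis .
qed

lemma integral_indicator_Int_Ioo_deriv_no_frontier:
  fixes \<phi> D :: "real \<Rightarrow> real" and Z :: "real set"
  assumes \<phi>': "\<And>x. (\<phi> has_real_derivative D x) (at x)" and D: "continuous_on UNIV D"
    and "frontier Z \<inter> {u<..<v} = {}" "u < v"
    and c1: "eventually (\<lambda>y. y \<in> Z \<longleftrightarrow> c1) (at_right u)"
    and c2: "eventually (\<lambda>y. y \<in> Z \<longleftrightarrow> c2) (at_left v)"
  shows "(LINT x|lebesgue. indicator (Z \<inter> {u<..<v}) x * D x) = of_bool c2 * \<phi> v - of_bool c1 * \<phi> u"
proof -
  obtain y1 where y1: "y1 \<in> {u<..<v}" "y1 \<in> Z \<longleftrightarrow> c1"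
    using eventually_happens'[OF _ eventually_conj[OF eventually_at_right_real[OF \<open>u < v\<close>] c1]] by auto
  obtain y2 where y2: "y2 \<in> {u<..<v}" "y2 \<in> Z \<longleftrightarrow> c2"
    using eventually_happens'[OF _ eventually_conj[OF eventually_at_left_real[OF \<open>u < v\<close>] c2]] by auto
  consider "{u<..<v} \<subseteq> Z" | "{u<..<v} \<inter> Z = {}"
    using Ioo_subset_or_disjoint_if_no_frontier assms(3) by blast
  then show ?thesis
  proof cases
    case 1
    then have "c1" "c2" "Z \<inter> {u<..<v} = {u<..<v}" using y1 y2 by auto
    then show ?thesis
      using integral_indicator_Ioo_deriv[OF \<phi>' D, of u v] \<open>u < v\<close> by simp
  next
    case 2
    then have "\<not> c1" "\<not> c2" "Z \<inter> {u<..<v} = {}" using y1 y2 by auto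
    then show ?thesis by simp
  qed
qed

text \<open>Each boundary point changes the boundary term by at most \<open>\<bar>\<phi>\<bar> \<le> 1\<close>.\<close>

lemma integral_indicator_Int_Ioo_deriv_le:
  fixes \<phi> D :: "real \<Rightarrow> real" and Z :: "real set"
  assumes \<phi>': "\<And>x. (\<phi> has_real_derivative D x) (at x)" and D: "continuous_on UNIV D"
    and bd: "\<And>x. \<bar>\<phi> x\<bar> \<le> 1" and Z: "Z \<in> sets lebesgue"
    and F: "finite F" "frontier Z \<inter> {u<..<v} = F" and "u < v"
    and c1: "eventually (\<lambda>y. y \<in> Z \<longleftrightarrow> c1) (at_right u)"
    and c2: "eventually (\<lambda>y. y \<in> Z \<longleftrightarrow> c2) (at_left v)"
  shows "(LINT x|lebesgue. indicator (Z \<inter> {u<..<v}) x * D x)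
           \<le> card F + of_bool c2 * \<phi> v - of_bool c1 * \<phi> u"
  using F \<open>u < v\<close> c2
proof (induction F arbitrary: v c2 rule: finite_linorder_max_induct)
  case empty
  then show ?case
    using integral_indicator_Int_Ioo_deriv_no_frontier[OF \<phi>' D _ _ c1] by simp
next
  case (insert x F)
  have x: "u < x" "x < v" using insert.prems(1) by auto
  have left: "frontier Z \<inter> {u<..<x} = F"
  proof
    show "frontier Z \<inter> {u<..<x} \<subseteq> F"
      using insert.prems(1) x by fastforce
    show "F \<subseteq> frontier Z \<inter> {u<..<x}"
      using insert.prems(1) insert.hyps(2) by fastforce
  qed
  have "frontier Z \<inter> {x<..<v} \<subseteq> insert x F"
    using insert.prems(1) x by fastforce
  then have right: "frontier Z \<inter> {x<..<v} = {}"
    using insert.hyps(2) by fastforce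
  obtain cL where cL: "eventually (\<lambda>y. y \<in> Z \<longleftrightarrow> cL) (at_left x)"
    using eventually_mem_iff_at_left[of Z u x] left insert.hyps(1) x(1) by blast
  obtain cR where cR: "eventually (\<lambda>y. y \<in> Z \<longleftrightarrow> cR) (at_right x)"
    using eventually_mem_iff_at_right[of Z x v] right x(2) by auto
  have "(LINT y|lebesgue. indicator (Z \<inter> {u<..<v}) y * D y)
      = (LINT y|lebesgue. indicator (Z \<inter> {u<..<x}) y * D y)
      + (LINT y|lebesgue. indicator (Z \<inter> {x<..<v}) y * D y)"
    using x by (rule integral_indicator_Int_Ioo_split[OF Z D])
  also have "\<dots> \<le> (card F + of_bool cL * \<phi> x - of_bool c1 * \<phi> u)
      + (of_bool c2 * \<phi> v - of_bool cR * \<phi> x)"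
    using insert.IH[OF left x(1) cL]
      integral_indicator_Int_Ioo_deriv_no_frontier[OF \<phi>' D right x(2) cR insert.prems(3)]
    by simp
  also have "\<dots> \<le> card (insert x F) + of_bool c2 * \<phi> v - of_bool c1 * \<phi> u"
    using bd[of x] insert.hyps(1,2) by (cases cL; cases cR) auto
  finally show ?case .
qed

lemma Per_le_card_frontier:
  assumes A: "A \<in> sets lebesgue" and Z: "Z \<in> sets lebesgue"
    and AZ: "negligible ((A - Z) \<union> (Z - A))"
    and fin: "finite (frontier Z \<inter> {a<..<b})" and "a < b"
  shows "Per A {a<..<b} \<le> card (frontier Z \<inter> {a<..<b})"
proof (rule Per_leI)
  fix \<phi> assume \<phi>: "\<phi> \<in> C1c_unit {a<..<b}"
  obtain D where \<phi>': "\<And>x. (\<phi> has_real_derivative D x) (at x)" and D: "continuous_on UNIV D"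
    and "deriv \<phi> = D"
    using C1c_unit_derivative[OF \<phi>] by blast
  have "(LINT x|lebesgue. indicator A x * deriv \<phi> x)
      = (LINT x|lebesgue. indicator (Z \<inter> {a<..<b}) x * D x)"
  proof (rule integral_cong_AE)
    show "(\<lambda>x. indicator A x * deriv \<phi> x) \<in> borel_measurable lebesgue"
      using integrable_indicator_mult_deriv[OF \<phi> A] by (rule borel_measurable_integrable)
    show "(\<lambda>x. indicator (Z \<inter> {a<..<b}) x * D x) \<in> borel_measurable lebesgue"
      using integrable_indicator_Int_Ioo_mult_continuous[OF Z D] by (rule borel_measurable_integrable)
    have "AE x in lebesgue. x \<notin> (A - Z) \<union> (Z - A)"
      using AZ by (intro AE_not_in) (simp add: negligible_iff_null_sets)
    then show "AE x in lebesgue. indicator A x * deriv \<phi> x = indicator (Z \<inter> {a<..<b}) x * D x"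
    proof eventually_elim
      case (elim x)
      then show ?case
        using C1c_unit_indicator_Int[OF \<phi>, of A x, symmetric] \<open>deriv \<phi> = D\<close>
        by (auto simp: indicator_def)
    qed
  qed
  also have "\<dots> \<le> card (frontier Z \<inter> {a<..<b})"
  proof -
    obtain c1 where "eventually (\<lambda>y. y \<in> Z \<longleftrightarrow> c1) (at_right a)"
      using eventually_mem_iff_at_right[OF fin \<open>a < b\<close>] by blast
    moreover obtain c2 where "eventually (\<lambda>y. y \<in> Z \<longleftrightarrow> c2) (at_left b)"
      using eventually_mem_iff_at_left[OF fin \<open>a < b\<close>] by blast
    moreover have "\<phi> a = 0" "\<phi> b = 0"
      using C1c_unitD(2)[OF \<phi>] closure_subset[of "{x. \<phi> x \<noteq> 0}"] by auto
    ultimately show ?thesis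
      using integral_indicator_Int_Ioo_deriv_le[OF \<phi>' D C1c_unitD(3)[OF \<phi>] Z fin refl \<open>a < b\<close>]
      by force
  qed
  finally show "(LINT x|lebesgue. indicator A x * deriv \<phi> x) \<le> card (frontier Z \<inter> {a<..<b})" .
qed

lemma negligible_symdiff_essential_support:
  assumes "A \<in> sets lebesgue" "\<And>a b. Per A {a<..<b} < \<infinity>"
  shows "negligible ((A - essential_support A) \<union> (essential_support A - A))"
  using negligible_diff_essential_support negligible_essential_support_diff[OF assms]
  by (rule negligible_Un)

lemma Per_eq_card_frontier_essential_support:
  assumes A: "A \<in> sets lebesgue" and fin: "\<And>a b. Per A {a<..<b} < \<infinity>" and "a < b"
  shows "Per A {a<..<b} = card (frontier (essential_support A) \<inter> {a<..<b})"
proof (rule antisym)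
  have "closed (essential_support A)" by (rule closed_essential_support)
  then have "essential_support A \<in> sets lebesgue" by (simp add: borel_closed sets_completionI_sets)
  then show "Per A {a<..<b} \<le> card (frontier (essential_support A) \<inter> {a<..<b})"
    using Per_le_card_frontier[OF A _ negligible_symdiff_essential_support[OF A fin]]
      finite_frontier_essential_support[OF A fin] \<open>a < b\<close> by blast
  show "ereal (card (frontier (essential_support A) \<inter> {a<..<b})) \<le> Per A {a<..<b}"
    using finite_frontier_essential_support[OF A fin] jump_point_if_frontier_essential_support[OF A]
    by (intro card_jump_points_le_Per[OF A]) auto
qed

section \<open>Measurability\<close>

definition thickening :: "real set \<Rightarrow> real \<Rightarrow> real set" where
  "thickening K r = (\<Union>x\<in>K. ball x r)"

lemma open_thickening: "open (thickening K r)"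
  unfolding thickening_def by (intro open_UN) auto

lemma bounded_thickening:
  assumes "bounded K"
  shows "bounded (thickening K r)"
proof -
  obtain R where "\<And>x. x \<in> K \<Longrightarrow> \<bar>x\<bar> \<le> R" using assms unfolding bounded_real by blast
  then have "\<bar>y\<bar> \<le> R + \<bar>r\<bar>" if "y \<in> thickening K r" for y
    using that unfolding thickening_def by (force simp: dist_real_def)
  then show ?thesis unfolding bounded_real by blast
qed

lemma essential_support_Int_compact_iff:
  assumes K: "compact K"
  shows "essential_support A \<inter> K \<noteq> {}
           \<longleftrightarrow> (\<forall>n. \<not> negligible (A \<inter> thickening K (inverse (Suc n))))"
proof
  assume "essential_support A \<inter> K \<noteq> {}"
  then obtain x where x: "x \<in> essential_support A" "x \<in> K" by blast
  show "\<forall>n. \<not> negligible (A \<inter> thickening K (inverse (Suc n)))"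
  proof
    fix n
    have "\<not> negligible (A \<inter> ball x (inverse (Suc n)))"
      using x(1) unfolding essential_support_def by simp
    moreover have "A \<inter> ball x (inverse (Suc n)) \<subseteq> A \<inter> thickening K (inverse (Suc n))"
      using x(2) unfolding thickening_def by blast
    ultimately show "\<not> negligible (A \<inter> thickening K (inverse (Suc n)))"
      using negligible_subset by blast
  qed
next
  assume H: "\<forall>n. \<not> negligible (A \<inter> thickening K (inverse (Suc n)))"
  show "essential_support A \<inter> K \<noteq> {}"
  proof
    assume empty: "essential_support A \<inter> K = {}"
    let ?G = "{ball x r | x r. r > 0 \<and> negligible (A \<inter> ball x r)}"
    have "K \<subseteq> \<Union>?G"
    proof
      fix x assume "x \<in> K"
      then have "x \<notin> essential_support A" using empty by blast
      then obtain r where "r > 0" "negligible (A \<inter> ball x r)"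
        unfolding essential_support_def by blast
      then show "x \<in> \<Union>?G" using centre_in_ball[of x r] by blast
    qed
    then obtain \<epsilon> where "0 < \<epsilon>" and \<epsilon>: "\<And>x. x \<in> K \<Longrightarrow> \<exists>G \<in> ?G. ball x \<epsilon> \<subseteq> G"
      by (rule Heine_Borel_lemma[OF K]) blast+
    obtain n where n: "inverse (real (Suc n)) < \<epsilon>" using reals_Archimedean[OF \<open>0 < \<epsilon>\<close>] by blast
    have "negligible (A \<inter> thickening K (inverse (Suc n)))"
    proof (rule negligible_Int_if_locally_negligible)
      fix y assume "y \<in> thickening K (inverse (Suc n))"
      then obtain x where "x \<in> K" "y \<in> ball x \<epsilon>"
        using n unfolding thickening_def by auto
      then obtain x' r where "y \<in> ball x' r" "negligible (A \<inter> ball x' r)"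
        using \<epsilon> by blast
      moreover obtain s where "s > 0" "ball y s \<subseteq> ball x' r"
        using \<open>y \<in> ball x' r\<close> by (rule openE[OF open_ball])
      ultimately show "\<exists>s>0. negligible (A \<inter> ball y s)"
        using negligible_subset by blast
    qed
    then show False using H by blast
  qed
qed

lemma space_loc_meas_space: "space loc_meas_space = sets lebesgue"
  unfolding loc_meas_space_def by (rule space_measure_of_conv)

lemma sets_loc_meas_spaceI: "loc_meas_open U \<Longrightarrow> U \<in> sets loc_meas_space"
  unfolding loc_meas_space_def by (rule in_measure_of) (auto simp: loc_meas_open_def)

lemma emeasure_Int_le_symdiff:
  assumes "B \<in> sets M" "B' \<in> sets M" "T \<in> sets M" "T \<subseteq> S" "S \<in> sets M"
  shows "emeasure M (B \<inter> T) \<le> emeasure M (B' \<inter> T) + emeasure M (((B - B') \<union> (B' - B)) \<inter> S)"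
proof -
  have B'T: "B' \<inter> T \<in> sets M" using assms(2,3) by (rule sets.Int)
  have D: "((B - B') \<union> (B' - B)) \<inter> S \<in> sets M"
    using assms(1,2,5) by (intro sets.Int sets.Un sets.Diff)
  have "B \<inter> T \<subseteq> (B' \<inter> T) \<union> (((B - B') \<union> (B' - B)) \<inter> S)"
    using assms(4) by blast
  then have "emeasure M (B \<inter> T) \<le> emeasure M ((B' \<inter> T) \<union> (((B - B') \<union> (B' - B)) \<inter> S))"
    by (rule emeasure_mono[OF _ sets.Un[OF B'T D]])
  also have "\<dots> \<le> emeasure M (B' \<inter> T) + emeasure M (((B - B') \<union> (B' - B)) \<inter> S)"
    by (rule emeasure_subadditive[OF B'T D])
  finally show ?thesis .
qed

lemma loc_meas_open_not_negligible_Int: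
  assumes T: "T \<in> sets lebesgue" "bounded T"
  shows "loc_meas_open {B \<in> sets lebesgue. \<not> negligible (B \<inter> T)}"
  unfolding loc_meas_open_def
proof (intro conjI ballI)
  fix B0 assume B0: "B0 \<in> {B \<in> sets lebesgue. \<not> negligible (B \<inter> T)}"
  obtain R where R: "\<And>x. x \<in> T \<Longrightarrow> \<bar>x\<bar> \<le> R" using T(2) unfolding bounded_real by blast
  have "T \<subseteq> {-R..R}"
  proof
    fix x assume "x \<in> T"
    then show "x \<in> {-R..R}" using R[of x] by (simp add: abs_le_iff)
  qed
  moreover obtain N :: nat where "R < N" using reals_Archimedean2 by blast
  then have "{-R..R} \<subseteq> {- real N..real N}" by simp
  ultimately have N: "T \<subseteq> {- real N..real N}" by (rule order_trans)
  have "B0 \<in> sets lebesgue" "\<not> negligible (B0 \<inter> T)" using B0 by simp_all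
  have B0m: "B0 \<inter> T \<in> lmeasurable"
  proof (rule fmeasurableI2[of "{- real N..real N}"])
    show "B0 \<inter> T \<subseteq> {- real N..real N}" using N by blast
    show "B0 \<inter> T \<in> sets lebesgue" using \<open>B0 \<in> sets lebesgue\<close> T(1) by (rule sets.Int)
  qed simp
  define e where "e = measure lebesgue (B0 \<inter> T)"
  have "e \<noteq> 0" using \<open>\<not> negligible (B0 \<inter> T)\<close> negligible_iff_measure0[OF B0m] by (simp add: e_def)
  then have "e > 0" by (simp add: e_def order_less_le)
  have eB0: "emeasure lebesgue (B0 \<inter> T) = ennreal e"
    using B0m by (simp add: e_def emeasure_eq_measure2)
  show "\<exists>n::nat. \<exists>e>0. \<forall>B\<in>sets lebesgue.
        emeasure lebesgue (((B0 - B) \<union> (B - B0)) \<inter> {- real n .. real n}) < ennreal e \<longrightarrow>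
        B \<in> {B \<in> sets lebesgue. \<not> negligible (B \<inter> T)}"
  proof (intro exI[of _ N] exI[of _ e] conjI ballI impI)
    fix B assume B: "B \<in> sets lebesgue"
      and small: "emeasure lebesgue (((B0 - B) \<union> (B - B0)) \<inter> {- real N .. real N}) < ennreal e"
    have "\<not> negligible (B \<inter> T)"
    proof
      assume "negligible (B \<inter> T)"
      then have "emeasure lebesgue (B \<inter> T) = 0"
        by (simp add: negligible_iff_null_sets null_setsD1)
      have "emeasure lebesgue (B0 \<inter> T) \<le> emeasure lebesgue (B \<inter> T)
          + emeasure lebesgue (((B0 - B) \<union> (B - B0)) \<inter> {- real N .. real N})"
        using \<open>B0 \<in> sets lebesgue\<close> B T(1) N by (rule emeasure_Int_le_symdiff) simp
      also have "\<dots> < ennreal e" using \<open>emeasure lebesgue (B \<inter> T) = 0\<close> small by simp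
      finally show False using eB0 by simp
    qed
    then show "B \<in> {B \<in> sets lebesgue. \<not> negligible (B \<inter> T)}" using B by blast
  qed (use \<open>e > 0\<close> in simp)
qed blast

lemma random_measurable_setD:
  "random_measurable_set M X \<Longrightarrow> \<omega> \<in> space M \<Longrightarrow> X \<omega> \<in> sets lebesgue"
  unfolding random_measurable_set_def
  by (metis measurable_space space_loc_meas_space)

lemma random_closed_set_essential_support:
  assumes "random_measurable_set M X"
  shows "random_closed_set M (\<lambda>\<omega>. essential_support (X \<omega>))"
  unfolding random_closed_set_def
proof (intro conjI allI impI)
  show "\<forall>\<omega>\<in>space M. closed (essential_support (X \<omega>))"
    using closed_essential_support by blast
  fix K :: "real set" assume K: "compact K"
  have X: "X \<in> M \<rightarrow>\<^sub>M loc_meas_space" using assms unfolding random_measurable_set_def .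
  have "X \<omega> \<in> sets lebesgue" if "\<omega> \<in> space M" for \<omega>
    using random_measurable_setD[OF assms that] .
  moreover define W where "W n = {B \<in> sets lebesgue. \<not> negligible (B \<inter> thickening K (inverse (Suc n)))}"
    for n :: nat
  ultimately have "{\<omega> \<in> space M. essential_support (X \<omega>) \<inter> K \<noteq> {}} = (\<Inter>n. X -` W n \<inter> space M)"
    using essential_support_Int_compact_iff[OF K] by auto
  also have "\<dots> \<in> sets M"
  proof -
    have "loc_meas_open (W n)" for n
      unfolding W_def using compact_imp_bounded[OF K] open_thickening
      by (intro loc_meas_open_not_negligible_Int bounded_thickening)
         (auto simp: borel_open sets_completionI_sets)
    then have "X -` W n \<inter> space M \<in> sets M" for n
      by (intro measurable_sets[OF X] sets_loc_meas_spaceI)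
    then show ?thesis by (intro sets.countable_INT') auto
  qed
  finally show "{\<omega> \<in> space M. essential_support (X \<omega>) \<inter> K \<noteq> {}} \<in> sets M" .
qed

theorem proposition2p8:
  fixes M :: "'a measure" and X :: "'a \<Rightarrow> real set"
  assumes "prob_space M"
    and "complete_measure M"
    and "random_measurable_set M X"
    and "AE \<omega> in M. \<forall>V. bounded V \<and> open V \<longrightarrow> Per (X \<omega>) V < \<infinity>"
  shows "\<exists>Z. random_closed_set M Z \<and>
    (AE \<omega> in M. \<forall>a b. a < b \<longrightarrow>
       emeasure lebesgue ((X \<omega> - Z \<omega>) \<union> (Z \<omega> - X \<omega>)) = 0 \<and>
       Per (X \<omega>) {a<..<b} = enn2ereal (emeasure (count_space UNIV) (frontier (Z \<omega>) \<inter> {a<..<b})))"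
proof (intro exI conjI)
  show "random_closed_set M (\<lambda>\<omega>. essential_support (X \<omega>))"
    using assms(3) by (rule random_closed_set_essential_support)
  show "AE \<omega> in M. \<forall>a b. a < b \<longrightarrow>
       emeasure lebesgue ((X \<omega> - essential_support (X \<omega>)) \<union> (essential_support (X \<omega>) - X \<omega>)) = 0 \<and>
       Per (X \<omega>) {a<..<b}
         = enn2ereal (emeasure (count_space UNIV) (frontier (essential_support (X \<omega>)) \<inter> {a<..<b}))"
    using assms(4) AE_space
  proof eventually_elim
    case (elim \<omega>)
    have A: "X \<omega> \<in> sets lebesgue" using random_measurable_setD[OF assms(3) elim(2)] .
    have fin: "Per (X \<omega>) {a<..<b} < \<infinity>" for a b using elim by simp
    show ?case
      using negligible_symdiff_essential_support[OF A fin]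
        Per_eq_card_frontier_essential_support[OF A fin]
        finite_frontier_essential_support[OF A fin]
      by (simp add: negligible_iff_null_sets null_setsD1)
  qed
qed

end
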